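(* Let $\theta\in\mathbb{R}\setminus\mathbb{Q}$, $p_1,\ldots,p_k\in\mathbb{Z}\setminus\{0\}$ and $\xi_1,\ldots,\xi_k\in\mathbb{Q}\cap[0,1)$, and consider the system $\hat\theta_j=p_j\theta+\xi_j$, $1\le j\le k$. If there exist $1\le j'<j''\le k$ with $p_{j'}p_{j''}=-1$ and $\{\xi_{j'}+\xi_{j''}\}=0$, then this system is equivalent to the system $\hat\theta_j=p_j\theta+\xi_j$, $j\in\{1,\ldots,k\}\setminus\{j',j''\}$, i.e. the two systems have the same effective difference number.
   Context: For a system $\hat\theta_i=q_i\theta+\zeta_i$, $i\in I$ ($I$ finite), with $\theta$ irrational, $q_i\in\mathbb{Z}\setminus\{0\}$, $\zeta_i\in\mathbb{Q}\cap[0,1)$, and for $\eta\in\mathbb{Q}$, set $\eta(\zeta_i)=\{\zeta_i-q_i\eta\}$ (fractional part), $k_0^+(\eta)=\#\{i:\eta(\zeta_i)=0,q_i>0\}$, $k_0^-(\eta)=\#\{i:\eta(\zeta_i)=0,q_i<0\}$. The effective difference number of the system is $\max\{|k_0^+(\eta)-k_0^-(\eta)|:\eta\in\mathbb{Q}\}$ (with $k_0^\pm(\eta)=0$ for the empty system). Two such systems are called equivalent if their effective difference numbers coincide. *)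

theory Defs
  imports Complex_Main
begin

text \<open>A system theta_i = q_i theta + zeta_i, i in I, is represented by the finite
index set I, the integer coefficients q and the rational shifts zeta.
eta(zeta_i) = frac(zeta_i - q_i eta).\<close>

definition k0_plus :: "'i set \<Rightarrow> ('i \<Rightarrow> int) \<Rightarrow> ('i \<Rightarrow> rat) \<Rightarrow> rat \<Rightarrow> nat" where
  "k0_plus I q \<zeta> \<eta> = card {i \<in> I. frac (\<zeta> i - of_int (q i) * \<eta>) = 0 \<and> q i > 0}"

definition k0_minus :: "'i set \<Rightarrow> ('i \<Rightarrow> int) \<Rightarrow> ('i \<Rightarrow> rat) \<Rightarrow> rat \<Rightarrow> nat" where
  "k0_minus I q \<zeta> \<eta> = card {i \<in> I. frac (\<zeta> i - of_int (q i) * \<eta>) = 0 \<and> q i < 0}"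

definition eff_diff_number :: "'i set \<Rightarrow> ('i \<Rightarrow> int) \<Rightarrow> ('i \<Rightarrow> rat) \<Rightarrow> nat" where
  "eff_diff_number I q \<zeta> =
     Max ((\<lambda>\<eta>. nat \<bar>int (k0_plus I q \<zeta> \<eta>) - int (k0_minus I q \<zeta> \<eta>)\<bar>) ` UNIV)"

end

theory Submission
  imports Defs
begin

text \<open>A pair of equations with coefficients \<open>q\<^sub>j' = -q\<^sub>j'' = \<plusminus>1\<close> and shifts summing to an
integer is, for every \<open>\<eta>\<close>, either counted in neither \<open>k\<^sub>0\<^sup>+(\<eta>)\<close> nor \<open>k\<^sub>0\<^sup>-(\<eta>)\<close>, or once in
each: \<open>\<zeta>\<^sub>j'' - q\<^sub>j'' \<eta> = (\<zeta>\<^sub>j' + \<zeta>\<^sub>j'') - (\<zeta>\<^sub>j' - q\<^sub>j' \<eta>)\<close> is an integer exactly when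
\<open>\<zeta>\<^sub>j' - q\<^sub>j' \<eta>\<close> is. Removing the pair therefore leaves \<open>k\<^sub>0\<^sup>+(\<eta>) - k\<^sub>0\<^sup>-(\<eta>)\<close> unchanged for
every \<open>\<eta>\<close>, and with it the effective difference number.\<close>

lemma int_mult_eq_minus_one_iff:
  fixes a b :: int
  shows "a * b = -1 \<longleftrightarrow> (a = 1 \<and> b = -1) \<or> (a = -1 \<and> b = 1)"
proof -
  have "a * b = -1 \<longleftrightarrow> a * (- b) = 1" by simp
  also have "\<dots> \<longleftrightarrow> (a = 1 \<and> b = -1) \<or> (a = -1 \<and> b = 1)"
    by (subst zmult_eq_1_iff) auto
  finally show ?thesis .
qed

lemma frac_eq_0_complementary:
  fixes a b x :: "'a :: floor_ceiling"
  assumes "a + b \<in> \<int>"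
  shows "frac (b + x) = 0 \<longleftrightarrow> frac (a - x) = 0"
proof -
  have "b + x = (a + b) - (a - x)" by simp
  then show ?thesis
    unfolding frac_eq_0_iff using assms
    by (metis Ints_diff diff_diff_eq2 add_diff_cancel_left')
qed

lemma k0_plus_split:
  assumes "finite I" and "J \<subseteq> I"
  shows "k0_plus I q \<zeta> \<eta> = k0_plus (I - J) q \<zeta> \<eta> + k0_plus J q \<zeta> \<eta>"
  unfolding k0_plus_def using assms
  by (subst card_Un_disjoint[symmetric]) (auto intro: arg_cong[where f = card] rev_finite_subset)

lemma k0_minus_split:
  assumes "finite I" and "J \<subseteq> I"
  shows "k0_minus I q \<zeta> \<eta> = k0_minus (I - J) q \<zeta> \<eta> + k0_minus J q \<zeta> \<eta>"
  unfolding k0_minus_def using assms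
  by (subst card_Un_disjoint[symmetric]) (auto intro: arg_cong[where f = card] rev_finite_subset)

lemma k0_plus_eq_k0_minus_cancelling_pair:
  assumes "j' \<noteq> j''" and "q j' * q j'' = -1" and "frac (\<zeta> j' + \<zeta> j'') = 0"
  shows "k0_plus {j', j''} q \<zeta> \<eta> = k0_minus {j', j''} q \<zeta> \<eta>"
proof -
  define Z where "Z i \<longleftrightarrow> frac (\<zeta> i - of_int (q i) * \<eta>) = 0" for i
  have q: "(q j' = 1 \<and> q j'' = -1) \<or> (q j' = -1 \<and> q j'' = 1)"
    using assms(2) int_mult_eq_minus_one_iff by blast
  have "\<zeta> j' + \<zeta> j'' \<in> \<int>"
    using assms(3) frac_eq_0_iff by blast
  then have "frac (\<zeta> j'' + of_int (q j') * \<eta>) = 0 \<longleftrightarrow> Z j'"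
    unfolding Z_def by (rule frac_eq_0_complementary)
  then have Z: "Z j'' \<longleftrightarrow> Z j'"
    using q unfolding Z_def by auto
  have plus: "k0_plus {j', j''} q \<zeta> \<eta> = card {i \<in> {j', j''}. Z i \<and> q i > 0}"
    and minus: "k0_minus {j', j''} q \<zeta> \<eta> = card {i \<in> {j', j''}. Z i \<and> q i < 0}"
    unfolding k0_plus_def k0_minus_def Z_def by simp_all
  have "{i \<in> {j', j''}. Z i \<and> q i > 0} = (if Z j' then {if q j' > 0 then j' else j''} else {})"
    and "{i \<in> {j', j''}. Z i \<and> q i < 0} = (if Z j' then {if q j' < 0 then j' else j''} else {})"
    using q Z by auto
  then show ?thesis
    unfolding plus minus by simp
qed

theorem lemma4p3:
  fixes \<theta> :: real and k :: nat and p :: "nat \<Rightarrow> int" and \<xi> :: "nat \<Rightarrow> rat"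
    and j' j'' :: nat
  assumes "\<theta> \<notin> \<rat>"
    and "\<forall>j\<in>{1..k}. p j \<noteq> 0"
    and "\<forall>j\<in>{1..k}. 0 \<le> \<xi> j \<and> \<xi> j < 1"
    and "1 \<le> j'" and "j' < j''" and "j'' \<le> k"
    and "p j' * p j'' = -1"
    and "frac (\<xi> j' + \<xi> j'') = 0"
  shows "eff_diff_number {1..k} p \<xi> = eff_diff_number ({1..k} - {j', j''}) p \<xi>"
proof -
  \<comment> \<open>Only the choice of the pair matters.\<close>
  have pair: "{j', j''} \<subseteq> {1..k}"
    using assms(4-6) by auto
  have "int (k0_plus {1..k} p \<xi> \<eta>) - int (k0_minus {1..k} p \<xi> \<eta>)
      = int (k0_plus ({1..k} - {j', j''}) p \<xi> \<eta>) - int (k0_minus ({1..k} - {j', j''}) p \<xi> \<eta>)"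
    for \<eta>
    using k0_plus_split[OF _ pair] k0_minus_split[OF _ pair]
      k0_plus_eq_k0_minus_cancelling_pair[OF _ assms(7,8), of \<eta>] assms(5)
    by simp
  then show ?thesis
    unfolding eff_diff_number_def by simp
qed

end
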